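(* Fix $x>0$. There exists a constant $C(x)$, depending only on $x$, such that for all nonnegative integers $n,s$ with $s^{16}\le n$, $$ \left|\omega_n^{(s)}(x)\right|\le \frac{C(x)}{(n+1)^{1/4}}. $$
   Context: For integers $n\ge 0$, $s\ge 0$, the generalized Laguerre polynomial is $L_n^{(s)}(x)=\frac{(n+s)!}{n!}\sum_{i=0}^{n}\binom{n}{i}(-1)^i\frac{x^i}{(i+s)!}$, and the normalized Laguerre function is $$ \omega_n^{(s)}(x)=\sqrt{\frac{n!}{(n+s)!}}\,e^{-x/2}\,x^{s/2}\,L_n^{(s)}(x), $$ which satisfies $\int_0^{\infty}\omega_m^{(s)}(x)\,\omega_n^{(s)}(x)\,dx=\delta_{n,m}$. *)

theory Defs
  imports "HOL-Analysis.Analysis"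
begin

definition laguerre :: "nat \<Rightarrow> nat \<Rightarrow> real \<Rightarrow> real" where
  "laguerre n s x = fact (n + s) / fact n *
     (\<Sum>i=0..n. real (n choose i) * (-1) ^ i * x ^ i / fact (i + s))"

definition laguerre_fun :: "nat \<Rightarrow> nat \<Rightarrow> real \<Rightarrow> real" where
  "laguerre_fun n s x = sqrt (fact n / fact (n + s)) * exp (- x / 2) *
     x powr (real s / 2) * laguerre n s x"

end

theory Submission
  imports Defs
begin

text \<open>
  Put a = sqrt x and v(k) = sqrt (m! k!) D(a, m, k), where D(a, m, k) is the coefficient of
  u^m w^k in exp (u w + a u - a w). Up to the sign (-1)^s and the factor exp (-x/2), the
  Laguerre function omega_m^(s)(x) equals v(m + s); the numbers exp (-x/2) v(k) are, up to
  signs, a row of the unitary displacement operator exp (a (A* - A)) in the number basis.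

  Two properties of the row v drive the estimate. First, sum_k v(k)^2 <= exp x, proved
  directly: for m = 0 the partial sums are those of exp x, and passing from row m to row
  m + 1 changes the partial sum up to K only by a boundary term that tends to 0 as K grows.
  This alone gives |omega| <= 1. Second, v satisfies the three-term recurrence
  sqrt (x (k+1)) v(k+1) + sqrt (x k) v(k-1) = (m - k - x) v(k). With R = sqrt (x m), on the
  window m + s <= k <= m + s + R/8 the diagonal coefficient m - k - x is small against the
  off-diagonal ones, and a Sonin-type quadratic form in (v(k), v(k+1)) with weight
  1 + 4 (k - m - s) / R is nondecreasing in k. Hence v(m+s)^2 <= 9 (v(k)^2 + v(k+1)^2) across
  the window, and summing over its roughly R/8 points against the mass bound gives
  omega^2 = O(1/R) = O(n^(-1/2)). The hypothesis s^16 <= n ensures that the window condition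
  4 s <= R fails only for boundedly many n.
\<close>

section \<open>Coefficients of exp (u w + a u - a w)\<close>

text \<open>The summand is the coefficient of u^m w^k in
  (u w)^j / j! * (a u)^(m-j) / (m-j)! * (-a w)^(k-j) / (k-j)!.\<close>

definition disp_term :: "real \<Rightarrow> nat \<Rightarrow> nat \<Rightarrow> nat \<Rightarrow> real" where
  "disp_term a m k j =
     (if j \<le> m \<and> j \<le> k
      then (-1) ^ (k - j) * a ^ (m + k - 2 * j) / (fact j * fact (m - j) * fact (k - j))
      else 0)"

definition disp_coeff :: "real \<Rightarrow> nat \<Rightarrow> nat \<Rightarrow> real" where
  "disp_coeff a m k = (\<Sum>j\<le>m. disp_term a m k j)"

lemma disp_term_eq_0: "m < j \<or> k < j \<Longrightarrow> disp_term a m k j = 0"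
  by (auto simp: disp_term_def)

lemma disp_term_Suc_Suc: "real (Suc j) * disp_term a (Suc m) (Suc k) (Suc j) = disp_term a m k j"
proof (cases "j \<le> m \<and> j \<le> k")
  case True
  then obtain q r where "m = j + q" "k = j + r" by (metis le_add_diff_inverse)
  then show ?thesis by (simp add: disp_term_def del: of_nat_Suc)
qed (auto simp: disp_term_def)

lemma disp_term_Suc_left:
  assumes "j \<le> Suc m"
  shows "real (Suc m - j) * disp_term a (Suc m) k j = a * disp_term a m k j"
proof (cases "j \<le> m \<and> j \<le> k")
  case True
  then obtain q r where "m = j + q" "k = j + r" by (metis le_add_diff_inverse)
  then show ?thesis by (simp add: disp_term_def Suc_diff_le mult_ac del: of_nat_Suc)
qed (use assms in \<open>auto simp: disp_term_def\<close>)

lemma disp_term_Suc_right: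
  assumes "j \<le> Suc k"
  shows "real (Suc k - j) * disp_term a m (Suc k) j = - a * disp_term a m k j"
proof (cases "j \<le> m \<and> j \<le> k")
  case True
  then obtain q r where "m = j + q" "k = j + r" by (metis le_add_diff_inverse)
  then show ?thesis by (simp add: disp_term_def Suc_diff_le mult_ac del: of_nat_Suc)
qed (use assms in \<open>auto simp: disp_term_def\<close>)

lemma disp_coeff_Suc_left:
  "real (Suc m) * disp_coeff a (Suc m) k =
     (if k = 0 then 0 else disp_coeff a m (k - 1)) + a * disp_coeff a m k"
proof -
  have "real (Suc m) * disp_coeff a (Suc m) k =
        (\<Sum>j\<le>Suc m. real j * disp_term a (Suc m) k j) +
        (\<Sum>j\<le>Suc m. real (Suc m - j) * disp_term a (Suc m) k j)"
    unfolding disp_coeff_def sum_distrib_left sum.distrib[symmetric]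
    by (intro sum.cong refl) (simp add: of_nat_diff algebra_simps)
  also have "(\<Sum>j\<le>Suc m. real (Suc m - j) * disp_term a (Suc m) k j) =
             (\<Sum>j\<le>Suc m. a * disp_term a m k j)"
    by (intro sum.cong refl disp_term_Suc_left) simp
  also have "\<dots> = a * disp_coeff a m k"
    by (simp add: disp_term_eq_0 disp_coeff_def sum_distrib_left)
  also have "(\<Sum>j\<le>Suc m. real j * disp_term a (Suc m) k j) =
             (\<Sum>j\<le>m. real (Suc j) * disp_term a (Suc m) k (Suc j))"
    by (simp add: sum.atMost_Suc_shift del: sum.atMost_Suc of_nat_Suc)
  also have "\<dots> = (if k = 0 then 0 else disp_coeff a m (k - 1))"
    by (cases k) (simp_all add: disp_term_eq_0 disp_term_Suc_Suc disp_coeff_def del: of_nat_Suc)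
  finally show ?thesis .
qed

lemma disp_coeff_Suc_right:
  "real (Suc k) * disp_coeff a m (Suc k) =
     (if m = 0 then 0 else disp_coeff a (m - 1) k) - a * disp_coeff a m k"
proof -
  have split: "real (Suc k) * disp_term a m (Suc k) j =
        real j * disp_term a m (Suc k) j + real (Suc k - j) * disp_term a m (Suc k) j" for j
    by (cases "j \<le> Suc k") (simp_all add: of_nat_diff algebra_simps disp_term_eq_0)
  have "real (Suc k) * disp_coeff a m (Suc k) =
        (\<Sum>j\<le>m. real j * disp_term a m (Suc k) j) +
        (\<Sum>j\<le>m. real (Suc k - j) * disp_term a m (Suc k) j)"
    unfolding disp_coeff_def sum_distrib_left sum.distrib[symmetric] split ..
  also have "(\<Sum>j\<le>m. real (Suc k - j) * disp_term a m (Suc k) j) = - a * disp_coeff a m k"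
  proof -
    have "real (Suc k - j) * disp_term a m (Suc k) j = - a * disp_term a m k j" for j
    proof (cases "j \<le> Suc k")
      case True
      then show ?thesis by (rule disp_term_Suc_right)
    qed (simp add: disp_term_eq_0)
    then show ?thesis by (simp add: disp_coeff_def sum_distrib_left)
  qed
  also have "(\<Sum>j\<le>m. real j * disp_term a m (Suc k) j) = (if m = 0 then 0 else disp_coeff a (m - 1) k)"
  proof (cases m)
    case (Suc m')
    then show ?thesis
      by (simp add: sum.atMost_Suc_shift disp_term_Suc_Suc disp_coeff_def del: sum.atMost_Suc of_nat_Suc)
  qed simp
  finally show ?thesis by simp
qed

lemma disp_coeff_three_term:
  "(real m - real k - a\<^sup>2) * disp_coeff a m k =
     a * ((if k = 0 then 0 else disp_coeff a m (k - 1)) + real (Suc k) * disp_coeff a m (Suc k))"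
proof -
  have left: "real m * disp_coeff a m k =
      (if m = 0 \<or> k = 0 then 0 else disp_coeff a (m - 1) (k - 1)) +
      (if m = 0 then 0 else a * disp_coeff a (m - 1) k)"
    using disp_coeff_Suc_left[of "m - 1" a k] by (cases m) auto
  have right: "real k * disp_coeff a m k =
      (if m = 0 \<or> k = 0 then 0 else disp_coeff a (m - 1) (k - 1)) -
      (if k = 0 then 0 else a * disp_coeff a m (k - 1))"
    using disp_coeff_Suc_right[of "k - 1" a m] by (cases k) auto
  have "(real m - real k - a\<^sup>2) * disp_coeff a m k =
        real m * disp_coeff a m k - real k * disp_coeff a m k - a\<^sup>2 * disp_coeff a m k"
    by (simp add: algebra_simps)
  also have "\<dots> = (if m = 0 then 0 else a * disp_coeff a (m - 1) k) +
                   (if k = 0 then 0 else a * disp_coeff a m (k - 1)) - a\<^sup>2 * disp_coeff a m k"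
    unfolding left right by simp
  also have "\<dots> = a * ((if k = 0 then 0 else disp_coeff a m (k - 1)) + real (Suc k) * disp_coeff a m (Suc k))"
    unfolding distrib_left disp_coeff_Suc_right by (simp add: algebra_simps power2_eq_square)
  finally show ?thesis .
qed

section \<open>Row masses\<close>

definition row_mass :: "real \<Rightarrow> nat \<Rightarrow> nat \<Rightarrow> real" where
  "row_mass a n K = fact n * (\<Sum>k\<le>K. fact k * (disp_coeff a n k)\<^sup>2)"

definition mass_defect :: "real \<Rightarrow> nat \<Rightarrow> nat \<Rightarrow> real" where
  "mass_defect a n K = fact n * fact (Suc K) * disp_coeff a n K *
     (disp_coeff a n K + a * disp_coeff a n (Suc K)) / real (Suc n)"

text \<open>One step of the induction in \<open>row_mass_Suc\<close>: \<open>p, q, r\<close> are the coefficients of row \<open>n\<close>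
  at \<open>k - 1, k, k + 1\<close>, \<open>z\<close> that of row \<open>n + 1\<close> at \<open>k\<close>, and \<open>F, G, L\<close> stand for \<open>n!, k!, k + 1\<close>.\<close>

lemma telescoping_identity:
  fixes N :: real
  assumes "N > 0" and "N * z = p + a * q" and "(N - L - a\<^sup>2) * q = a * (p + L * r)"
    and "A' = A - F * G * p * (p + a * q) / N"
  shows "A' + (N * F) * G * z\<^sup>2 = (A + F * G * q\<^sup>2) - F * (L * G) * q * (q + a * r) / N"
proof -
  have z: "z = (p + a * q) / N"
    using assms(1,2) by (simp add: field_simps)
  have r: "a * L * r = (N - L - a\<^sup>2) * q - a * p"
    using assms(3) by (simp add: algebra_simps)
  have "A' + (N * F) * G * z\<^sup>2 - ((A + F * G * q\<^sup>2) - F * (L * G) * q * (q + a * r) / N) =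
        F * G / N * (- p * (p + a * q) + (p + a * q)\<^sup>2 - N * q\<^sup>2 + L * q\<^sup>2 + q * (a * L * r))"
    unfolding z assms(4) using assms(1) by (simp add: field_simps power2_eq_square)
  also have "\<dots> = 0"
    unfolding r by (simp add: algebra_simps power2_eq_square)
  finally show ?thesis by simp
qed

lemma row_mass_Suc: "row_mass a (Suc n) K = row_mass a n K - mass_defect a n K"
proof (induction K)
  case 0
  have "real (Suc n) * disp_coeff a (Suc n) 0 = 0 + a * disp_coeff a n 0"
    using disp_coeff_Suc_left[of n a 0] by simp
  moreover have "(real (Suc n) - 1 - a\<^sup>2) * disp_coeff a n 0 = a * (0 + 1 * disp_coeff a n 1)"
    using disp_coeff_three_term[of n 0 a] by simp
  ultimately have "0 + (real (Suc n) * fact n) * 1 * (disp_coeff a (Suc n) 0)\<^sup>2 =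
      (0 + fact n * 1 * (disp_coeff a n 0)\<^sup>2) -
      fact n * (1 * 1) * disp_coeff a n 0 * (disp_coeff a n 0 + a * disp_coeff a n 1) / real (Suc n)"
    by (intro telescoping_identity) auto
  then show ?case
    by (simp add: row_mass_def mass_defect_def del: of_nat_Suc)
next
  case (Suc K)
  have left: "real (Suc n) * disp_coeff a (Suc n) (Suc K) = disp_coeff a n K + a * disp_coeff a n (Suc K)"
    using disp_coeff_Suc_left[of n a "Suc K"] by simp
  have three_term: "(real (Suc n) - real (Suc (Suc K)) - a\<^sup>2) * disp_coeff a n (Suc K) =
      a * (disp_coeff a n K + real (Suc (Suc K)) * disp_coeff a n (Suc (Suc K)))"
    using disp_coeff_three_term[of n "Suc K" a] by (simp add: algebra_simps)
  have "row_mass a (Suc n) K + (real (Suc n) * fact n) * fact (Suc K) * (disp_coeff a (Suc n) (Suc K))\<^sup>2 =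
      (row_mass a n K + fact n * fact (Suc K) * (disp_coeff a n (Suc K))\<^sup>2) -
      fact n * (real (Suc (Suc K)) * fact (Suc K)) * disp_coeff a n (Suc K) *
        (disp_coeff a n (Suc K) + a * disp_coeff a n (Suc (Suc K))) / real (Suc n)"
    by (rule telescoping_identity[OF _ left three_term Suc.IH[unfolded mass_defect_def]]) simp
  then show ?case
    by (simp add: row_mass_def mass_defect_def algebra_simps del: of_nat_Suc fact_Suc)
      (simp add: algebra_simps)
qed

lemma disp_coeff_abs_le:
  assumes "j \<le> K"
  shows "\<bar>disp_coeff a j K\<bar> \<le> real (Suc j) * ((1 + \<bar>a\<bar>) ^ (j + K) / fact (K - j))"
proof -
  have term_le: "\<bar>disp_term a j K i\<bar> \<le> (1 + \<bar>a\<bar>) ^ (j + K) / fact (K - j)" if "i \<le> j" for i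
  proof -
    have "\<bar>disp_term a j K i\<bar> = \<bar>a\<bar> ^ (j + K - 2 * i) / (fact i * fact (j - i) * fact (K - i))"
      using that assms by (simp add: disp_term_def abs_mult power_abs)
    also have "\<dots> \<le> (1 + \<bar>a\<bar>) ^ (j + K) / fact (K - j)"
    proof (rule frac_le)
      have "\<bar>a\<bar> ^ (j + K - 2 * i) \<le> (1 + \<bar>a\<bar>) ^ (j + K - 2 * i)"
        by (rule power_mono) auto
      also have "\<dots> \<le> (1 + \<bar>a\<bar>) ^ (j + K)"
        by (rule power_increasing) auto
      finally show "\<bar>a\<bar> ^ (j + K - 2 * i) \<le> (1 + \<bar>a\<bar>) ^ (j + K)" .
      have "fact (K - j) \<le> (fact (K - i) :: real)"
        using that by (intro fact_mono) simp
      also have "\<dots> \<le> fact i * fact (j - i) * fact (K - i)"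
        using mult_mono[OF fact_ge_1 fact_ge_1, of i "j - i"] by (simp add: mult_right_mono)
      finally show "fact (K - j) \<le> (fact i * fact (j - i) * fact (K - i) :: real)" .
    qed simp_all
    finally show ?thesis .
  qed
  have "\<bar>disp_coeff a j K\<bar> \<le> (\<Sum>i\<le>j. \<bar>disp_term a j K i\<bar>)"
    unfolding disp_coeff_def by (rule sum_abs)
  also have "\<dots> \<le> (\<Sum>i\<le>j. (1 + \<bar>a\<bar>) ^ (j + K) / fact (K - j))"
    by (intro sum_mono term_le) simp
  finally show ?thesis by simp
qed

lemma fact_add_le: "fact (m + r) \<le> (fact m :: real) * real (m + r) ^ r"
proof (induction r)
  case (Suc r)
  have "fact (m + Suc r) = real (m + Suc r) * (fact (m + r) :: real)"
    by simp
  also have "\<dots> \<le> real (m + Suc r) * (fact m * real (m + r) ^ r)"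
    by (rule mult_left_mono[OF Suc.IH]) simp
  also have "\<dots> \<le> real (m + Suc r) * (fact m * real (m + Suc r) ^ r)"
    by (intro mult_left_mono power_mono) auto
  finally show ?case by simp
qed simp

lemma of_nat_add_le_mult_power2:
  assumes "c \<ge> 1"
  shows "real t + c \<le> c * 2 ^ t"
proof (induction t)
  case (Suc t)
  have "real (Suc t) + c \<le> 2 * (real t + c)" using assms by simp
  also have "\<dots> \<le> 2 * (c * 2 ^ t)" using Suc.IH by simp
  finally show ?case by simp
qed simp

lemma disp_coeff_offset_abs_le:
  fixes a :: real and j t :: nat
  defines "U \<equiv> real (Suc j) * ((1 + \<bar>a\<bar>) ^ (2 * j + t + 2) / fact t)"
  shows "\<bar>disp_coeff a j (t + j)\<bar> \<le> U" and "\<bar>a * disp_coeff a j (Suc (t + j))\<bar> \<le> U"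
proof -
  have "\<bar>disp_coeff a j (t + j)\<bar> \<le> real (Suc j) * ((1 + \<bar>a\<bar>) ^ (2 * j + t) / fact t)"
    using disp_coeff_abs_le[of j "t + j" a] by (simp add: add.commute add.left_commute mult_2)
  also have "\<dots> \<le> U"
    unfolding U_def by (intro mult_left_mono divide_right_mono power_increasing) auto
  finally show "\<bar>disp_coeff a j (t + j)\<bar> \<le> U" .
  have "\<bar>disp_coeff a j (Suc (t + j))\<bar> \<le> real (Suc j) * ((1 + \<bar>a\<bar>) ^ (2 * j + t + 1) / fact (Suc t))"
    using disp_coeff_abs_le[of j "Suc (t + j)" a] by (simp add: Suc_diff_le add.commute add.left_commute mult_2)
  also have "\<dots> \<le> real (Suc j) * ((1 + \<bar>a\<bar>) ^ (2 * j + t + 1) / fact t)"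
    by (intro mult_left_mono divide_left_mono fact_mono) auto
  finally have "\<bar>a * disp_coeff a j (Suc (t + j))\<bar> \<le> (1 + \<bar>a\<bar>) * (real (Suc j) * ((1 + \<bar>a\<bar>) ^ (2 * j + t + 1) / fact t))"
    unfolding abs_mult by (intro mult_mono) auto
  also have "\<dots> = U"
    unfolding U_def by (simp add: field_simps)
  finally show "\<bar>a * disp_coeff a j (Suc (t + j))\<bar> \<le> U" .
qed

lemma mass_defect_abs_le:
  "\<bar>mass_defect a j (t + j)\<bar> \<le>
     (2 * fact j * real (Suc j) ^ (j + 2) * (1 + \<bar>a\<bar>) ^ (4 * j + 4)) * ((2 ^ (j + 1) * (1 + \<bar>a\<bar>)\<^sup>2) ^ t / fact t)"
proof -
  define A where "A = 1 + \<bar>a\<bar>"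
  define c where "c = real (Suc j)"
  define U where "U = c * (A ^ (2 * j + t + 2) / fact t)"
  have A1: "A \<ge> 1" and c1: "c \<ge> 1" and U0: "U \<ge> 0"
    unfolding A_def c_def U_def by simp_all
  have D1: "\<bar>disp_coeff a j (t + j)\<bar> \<le> U" and D2: "\<bar>disp_coeff a j (t + j) + a * disp_coeff a j (Suc (t + j))\<bar> \<le> 2 * U"
    using disp_coeff_offset_abs_le[of a j t] abs_triangle_ineq[of "disp_coeff a j (t + j)" "a * disp_coeff a j (Suc (t + j))"]
    unfolding U_def A_def c_def by linarith+
  have F: "fact (Suc (t + j)) \<le> fact t * (c * 2 ^ t) ^ (j + 1)"
  proof -
    have "fact (Suc (t + j)) \<le> fact t * real (t + (j + 1)) ^ (j + 1)"
      using fact_add_le[of t "j + 1"] by simp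
    also have "\<dots> \<le> fact t * (c * 2 ^ t) ^ (j + 1)"
      using of_nat_add_le_mult_power2[OF c1, of t] unfolding c_def by (intro mult_left_mono power_mono) auto
    finally show ?thesis .
  qed
  have "\<bar>mass_defect a j (t + j)\<bar> =
        fact j * fact (Suc (t + j)) * \<bar>disp_coeff a j (t + j)\<bar> *
        \<bar>disp_coeff a j (t + j) + a * disp_coeff a j (Suc (t + j))\<bar> / c"
    unfolding mass_defect_def c_def by (simp add: abs_mult)
  also have "\<dots> \<le> fact j * (fact t * (c * 2 ^ t) ^ (j + 1)) * U * (2 * U) / c"
    using c1 U0 by (intro divide_right_mono mult_mono F D1 D2 mult_left_mono) auto
  also have "\<dots> = (2 * fact j * c ^ (j + 2) * A ^ (4 * j + 4)) * ((2 ^ (j + 1) * A\<^sup>2) ^ t / fact t)"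
  proof -
    have "(c * 2 ^ t) ^ (j + 1) = c ^ (j + 1) * (2 ^ (j + 1)) ^ t"
      by (simp only: power_mult_distrib power_mult[symmetric] mult.commute)
    moreover have "A ^ (2 * j + t + 2) * A ^ (2 * j + t + 2) = A ^ (4 * j + 4) * (A\<^sup>2) ^ t"
    proof -
      have "(2 * j + t + 2) + (2 * j + t + 2) = (4 * j + 4) + 2 * t" by simp
      then show ?thesis by (metis power_add power_mult)
    qed
    ultimately show ?thesis
      using c1 unfolding U_def by (simp add: field_simps power_mult_distrib)
  qed
  finally show ?thesis unfolding A_def c_def .
qed

lemma mass_defect_tendsto_0: "(\<lambda>K. mass_defect a j K) \<longlonglongrightarrow> 0"
proof (rule LIMSEQ_offset[where k = j])
  define B where "B = (2::real) ^ (j + 1) * (1 + \<bar>a\<bar>)\<^sup>2"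
  define C where "C = 2 * fact j * real (Suc j) ^ (j + 2) * (1 + \<bar>a\<bar>) ^ (4 * j + 4)"
  have "(\<lambda>t. inverse (fact t) * B ^ t) \<longlonglongrightarrow> 0"
    by (rule summable_LIMSEQ_zero[OF summable_exp])
  then have "(\<lambda>t. C * (B ^ t / fact t)) \<longlonglongrightarrow> 0"
    by (intro tendsto_mult_right_zero) (simp add: field_simps)
  moreover have "\<forall>\<^sub>F t in sequentially. norm (mass_defect a j (t + j)) \<le> C * (B ^ t / fact t)"
    unfolding B_def C_def real_norm_def by (intro always_eventually allI mass_defect_abs_le)
  ultimately show "(\<lambda>t. mass_defect a j (t + j)) \<longlonglongrightarrow> 0"
    by (rule Lim_null_comparison[rotated])
qed

lemma row_mass_eq: "row_mass a n K = row_mass a 0 K - (\<Sum>j<n. mass_defect a j K)"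
  by (induction n) (simp_all add: row_mass_Suc)

lemma row_mass_0_le_exp: "row_mass a 0 K \<le> exp (a\<^sup>2)"
proof -
  have "fact k * (disp_coeff a 0 k)\<^sup>2 = (a\<^sup>2) ^ k /\<^sub>R fact k" for k
    by (simp add: disp_coeff_def disp_term_def power2_eq_square power_mult_distrib field_simps
        flip: power_add mult_2)
  then have "row_mass a 0 K = (\<Sum>k<Suc K. (a\<^sup>2) ^ k /\<^sub>R fact k)"
    by (simp add: row_mass_def lessThan_Suc_atMost)
  also have "\<dots> \<le> (\<Sum>k. (a\<^sup>2) ^ k /\<^sub>R fact k)"
    by (rule sum_le_suminf) (use exp_converges[of "a\<^sup>2"] in \<open>auto simp: sums_iff\<close>)
  also have "\<dots> = exp (a\<^sup>2)"
    using exp_converges sums_unique by metis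
  finally show ?thesis .
qed

lemma row_mass_mono: "K \<le> K' \<Longrightarrow> row_mass a n K \<le> row_mass a n K'"
  unfolding row_mass_def by (intro mult_left_mono sum_mono2) auto

lemma row_mass_le_exp: "row_mass a n K \<le> exp (a\<^sup>2)"
proof (rule LIMSEQ_le_const)
  show "(\<lambda>K'. exp (a\<^sup>2) - (\<Sum>j<n. mass_defect a j K')) \<longlonglongrightarrow> exp (a\<^sup>2)"
    using tendsto_diff[OF tendsto_const tendsto_sum[OF mass_defect_tendsto_0]] by simp
  have "row_mass a n K \<le> exp (a\<^sup>2) - (\<Sum>j<n. mass_defect a j K')" if "K \<le> K'" for K'
    using row_mass_mono[OF that, of a n] row_mass_eq[of a n K'] row_mass_0_le_exp[of a K'] by simp
  then show "\<exists>N. \<forall>K'\<ge>N. row_mass a n K \<le> exp (a\<^sup>2) - (\<Sum>j<n. mass_defect a j K')"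
    by blast
qed

section \<open>A Sonin-type function on a window\<close>

lemma abs_mult_le_half_sum_squares:
  fixes B c q w :: real
  assumes "\<bar>c\<bar> \<le> B"
  shows "\<bar>B * c * q * w\<bar> \<le> B\<^sup>2 * (q\<^sup>2 + w\<^sup>2) / 2"
proof -
  have "B * \<bar>c\<bar> \<le> B * B"
    using assms by (simp add: mult_left_mono)
  then have "\<bar>B * c * q * w\<bar> \<le> B * B * \<bar>q * w\<bar>"
    using assms by (simp add: abs_mult mult_right_mono flip: mult.assoc)
  also have "\<dots> \<le> B\<^sup>2 * (q\<^sup>2 + w\<^sup>2) / 2"
    using mult_left_mono[OF sum_squares_bound[of "\<bar>q\<bar>" "\<bar>w\<bar>"], of "B * B"]
    by (simp add: abs_mult power2_eq_square)
  finally show ?thesis .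
qed

lemma sonin_form_step:
  fixes B b c u q w l d x :: real
  assumes rec: "B * w + b * u = c * q" and "B\<^sup>2 = b\<^sup>2 + x"
    and "0 \<le> d" "0 \<le> x" "0 \<le> l" "0 \<le> b"
    and cond: "\<bar>l - d * c\<bar> \<le> 2 * d * B"
  shows "l * (b\<^sup>2 * (u\<^sup>2 + q\<^sup>2) - b * (c + 1) * u * q) \<le> (l + d) * (B\<^sup>2 * (q\<^sup>2 + w\<^sup>2) - B * c * q * w)"
proof -
  have "B\<^sup>2 * w\<^sup>2 - B * c * q * w = (B * w)\<^sup>2 - c * q * (B * w)"
    by (simp add: algebra_simps power2_eq_square)
  also have "\<dots> = b\<^sup>2 * u\<^sup>2 - b * c * u * q"
    unfolding eq_diff_eq[THEN iffD2, OF rec] by (simp add: algebra_simps power2_eq_square)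
  finally have id: "B\<^sup>2 * w\<^sup>2 - B * c * q * w = b\<^sup>2 * u\<^sup>2 - b * c * u * q" .
  have "(l + d) * (B\<^sup>2 * (q\<^sup>2 + w\<^sup>2) - B * c * q * w) =
      (l + d) * (B\<^sup>2 * q\<^sup>2 + (b\<^sup>2 * u\<^sup>2 - b * c * u * q))"
    unfolding id[symmetric] by (simp add: algebra_simps)
  then have "(l + d) * (B\<^sup>2 * (q\<^sup>2 + w\<^sup>2) - B * c * q * w) - l * (b\<^sup>2 * (u\<^sup>2 + q\<^sup>2) - b * (c + 1) * u * q) =
      (l * x + d * B\<^sup>2) * q\<^sup>2 + d * b\<^sup>2 * u\<^sup>2 + b * (l - d * c) * (u * q)"
    unfolding assms(2) by (simp add: algebra_simps power2_eq_square)
  moreover have "\<bar>b * (l - d * c) * (u * q)\<bar> \<le> d * B\<^sup>2 * q\<^sup>2 + d * b\<^sup>2 * u\<^sup>2"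
  proof -
    have "\<bar>b * (l - d * c) * (u * q)\<bar> = b * \<bar>l - d * c\<bar> * \<bar>u * q\<bar>"
      using \<open>0 \<le> b\<close> by (simp add: abs_mult)
    also have "\<dots> \<le> b * (2 * d * B) * \<bar>u * q\<bar>"
      using cond \<open>0 \<le> b\<close> by (intro mult_right_mono mult_left_mono) auto
    also have "\<dots> = d * (2 * (B * \<bar>q\<bar>) * (b * \<bar>u\<bar>))"
      by (simp add: abs_mult algebra_simps)
    also have "\<dots> \<le> d * ((B * \<bar>q\<bar>)\<^sup>2 + (b * \<bar>u\<bar>)\<^sup>2)"
      using \<open>0 \<le> d\<close> by (intro mult_left_mono) (auto simp: sum_squares_bound)
    finally show ?thesis by (simp add: power_mult_distrib algebra_simps)
  qed
  moreover have "l * x * q\<^sup>2 \<ge> 0"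
    using assms by simp
  ultimately show ?thesis
    by (simp add: algebra_simps abs_le_iff)
qed

lemma window_sum_le:
  fixes f :: "nat \<Rightarrow> real"
  assumes "\<And>k. k0 \<le> k \<Longrightarrow> k < k0 + L \<Longrightarrow> c \<le> 9 * (f k + f (Suc k))" and "\<And>k. 0 \<le> f k"
  shows "real L * c \<le> 18 * (\<Sum>k\<le>k0 + L. f k)"
proof -
  have "real L * c = (\<Sum>k\<in>{k0..<k0 + L}. c)"
    by simp
  also have "\<dots> \<le> (\<Sum>k\<in>{k0..<k0 + L}. 9 * (f k + f (Suc k)))"
    using assms(1) by (intro sum_mono) auto
  also have "\<dots> = 9 * ((\<Sum>k\<in>{k0..<k0 + L}. f k) + (\<Sum>k\<in>{k0..<k0 + L}. f (Suc k)))"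
    by (simp add: sum.distrib sum_distrib_left)
  also have "(\<Sum>k\<in>{k0..<k0 + L}. f (Suc k)) = (\<Sum>k\<in>{Suc k0..<Suc (k0 + L)}. f k)"
    by (rule sum.shift_bounds_Suc_ivl[symmetric])
  also have "9 * ((\<Sum>k\<in>{k0..<k0 + L}. f k) + (\<Sum>k\<in>{Suc k0..<Suc (k0 + L)}. f k)) \<le>
             9 * ((\<Sum>k\<le>k0 + L. f k) + (\<Sum>k\<le>k0 + L. f k))"
    using assms(2) by (intro mult_left_mono add_mono sum_mono2) auto
  finally show ?thesis by simp
qed

locale laguerre_window =
  fixes x R :: real and m s L :: nat and v :: "nat \<Rightarrow> real"
  assumes x_pos: "0 < x"
    and three_term: "\<And>k. 1 \<le> k \<Longrightarrow>
      sqrt (x * (real k + 1)) * v (k + 1) + sqrt (x * real k) * v (k - 1) = (real m - real k - x) * v k"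
    and R_eq: "R = sqrt (x * real m)"
    and R_ge: "8 \<le> R" and x_le: "8 * x \<le> R" and s_le: "4 * real s \<le> R" and L_le: "real L \<le> R / 8"
begin

definition offdiag :: "nat \<Rightarrow> real" where
  "offdiag k = sqrt (x * (real k + 1))"

definition diag :: "nat \<Rightarrow> real" where
  "diag k = real m - real k - x"

text \<open>The slope \<open>4 / R\<close> of the weight is what makes hypothesis \<open>cond\<close> of \<open>sonin_form_step\<close>
  hold throughout the window.\<close>

definition weight :: "nat \<Rightarrow> real" where
  "weight k = 1 + 4 / R * (real k - real (m + s))"

definition sonin :: "nat \<Rightarrow> real" where
  "sonin k = weight k * ((offdiag k)\<^sup>2 * ((v k)\<^sup>2 + (v (Suc k))\<^sup>2) - offdiag k * diag k * v k * v (Suc k))"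

lemma offdiag_sq: "(offdiag k)\<^sup>2 = x * (real k + 1)"
  using x_pos by (simp add: offdiag_def)

lemma R_le_m: "R \<le> real m / 8"
proof -
  have "R * R = x * real m"
    using x_pos R_eq by (simp flip: power2_eq_square)
  also have "\<dots> \<le> R / 8 * real m"
    using x_le by (intro mult_right_mono) auto
  finally show ?thesis
    using R_ge by (simp add: field_simps)
qed

lemma window_bounds:
  assumes "m + s \<le> k" "k \<le> m + s + L"
  shows "\<bar>diag k\<bar> \<le> R / 2" and "R \<le> offdiag k" and "1 \<le> weight k" and "weight k \<le> 3 / 2"
proof -
  show "\<bar>diag k\<bar> \<le> R / 2"
    using assms x_pos s_le L_le x_le unfolding diag_def by simp
  show "R \<le> offdiag k"
    unfolding offdiag_def R_eq using assms x_pos by (intro real_sqrt_le_mono mult_left_mono) auto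
  show "1 \<le> weight k"
    using assms R_ge unfolding weight_def by simp
  have "4 / R * (real k - real (m + s)) \<le> 4 / R * real L"
    using assms R_ge by (intro mult_left_mono) auto
  also have "\<dots> \<le> 1 / 2"
    using L_le R_ge by (simp add: field_simps)
  finally show "weight k \<le> 3 / 2"
    unfolding weight_def by simp
qed

lemma sonin_le_Suc:
  assumes "m + s \<le> k" "k < m + s + L"
  shows "sonin k \<le> sonin (Suc k)"
proof -
  note k = window_bounds[of k] window_bounds[of "Suc k"]
  have rec: "offdiag (Suc k) * v (Suc (Suc k)) + offdiag k * v k = diag (Suc k) * v (Suc k)"
    using three_term[of "Suc k"] unfolding offdiag_def diag_def by (simp add: add.commute)
  have "\<bar>weight k - 4 / R * diag (Suc k)\<bar> \<le> weight k + 4 / R * \<bar>diag (Suc k)\<bar>"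
    using R_ge k assms by (simp add: abs_mult abs_triangle_ineq4 order_trans[OF abs_triangle_ineq4])
  also have "\<dots> \<le> 3 / 2 + 4 / R * (R / 2)"
    using R_ge k assms by (intro add_mono mult_left_mono) auto
  also have "\<dots> \<le> 2 * (4 / R) * offdiag (Suc k)"
    using R_ge k assms by (simp add: field_simps)
  finally have step: "weight k * ((offdiag k)\<^sup>2 * ((v k)\<^sup>2 + (v (Suc k))\<^sup>2) - offdiag k * (diag (Suc k) + 1) * v k * v (Suc k))
      \<le> (weight k + 4 / R) * ((offdiag (Suc k))\<^sup>2 * ((v (Suc k))\<^sup>2 + (v (Suc (Suc k)))\<^sup>2) -
          offdiag (Suc k) * diag (Suc k) * v (Suc k) * v (Suc (Suc k)))"
    using k assms R_ge x_pos
    by (intro sonin_form_step[OF rec, where x = x]) (auto simp: offdiag_sq offdiag_def algebra_simps)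
  moreover have "diag k = diag (Suc k) + 1" and "weight (Suc k) = weight k + 4 / R"
    unfolding diag_def weight_def by (simp_all add: algebra_simps add_divide_distrib)
  ultimately show ?thesis
    unfolding sonin_def by simp
qed

lemma sonin_mono:
  assumes "m + s \<le> k" "k \<le> m + s + L"
  shows "sonin (m + s) \<le> sonin k"
  using assms
proof (induction k rule: dec_induct)
  case (step k)
  then show ?case
    using sonin_le_Suc[of k] by simp
qed simp

lemma sonin_lower: "x * (real (m + s) + 1) * (v (m + s))\<^sup>2 / 2 \<le> sonin (m + s)"
proof -
  have diag: "\<bar>diag (m + s)\<bar> \<le> offdiag (m + s)" and weight: "weight (m + s) = 1"
    using window_bounds[of "m + s"] R_ge by (auto simp: weight_def)
  have "offdiag (m + s) * diag (m + s) * v (m + s) * v (Suc (m + s)) \<le>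
      (offdiag (m + s))\<^sup>2 * ((v (m + s))\<^sup>2 + (v (Suc (m + s)))\<^sup>2) / 2"
    by (rule abs_le_D1[OF abs_mult_le_half_sum_squares[OF diag]])
  moreover have "(offdiag (m + s))\<^sup>2 * (v (m + s))\<^sup>2 \<le>
      (offdiag (m + s))\<^sup>2 * ((v (m + s))\<^sup>2 + (v (Suc (m + s)))\<^sup>2)"
    by (simp add: mult_left_mono)
  ultimately show ?thesis
    unfolding sonin_def weight mult.left_neutral offdiag_sq[symmetric] by linarith
qed

lemma sonin_upper:
  assumes "m + s \<le> k" "k < m + s + L"
  shows "sonin k \<le> 9 / 2 * x * (real (m + s) + 1) * ((v k)\<^sup>2 + (v (Suc k))\<^sup>2)"
proof -
  note k = window_bounds[of k]
  have "sonin k \<le> weight k * (3 / 2 * ((offdiag k)\<^sup>2 * ((v k)\<^sup>2 + (v (Suc k))\<^sup>2)))"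
    unfolding sonin_def using k assms R_ge
      abs_mult_le_half_sum_squares[of "diag k" "offdiag k" "v k" "v (Suc k)"]
    by (intro mult_left_mono) auto
  also have "\<dots> \<le> 3 / 2 * (3 / 2 * ((2 * x * (real (m + s) + 1)) * ((v k)\<^sup>2 + (v (Suc k))\<^sup>2)))"
  proof -
    have "real L \<le> real (m + s)"
      using L_le R_le_m R_ge by simp
    then have "(offdiag k)\<^sup>2 \<le> 2 * x * (real (m + s) + 1)"
      unfolding offdiag_sq using assms x_pos by (simp add: mult_left_mono)
    then show ?thesis
      using k assms by (intro mult_mono mult_left_mono mult_right_mono) auto
  qed
  finally show ?thesis
    by (simp add: algebra_simps)
qed

lemma window_pointwise:
  assumes "m + s \<le> k" "k < m + s + L"
  shows "(v (m + s))\<^sup>2 \<le> 9 * ((v k)\<^sup>2 + (v (Suc k))\<^sup>2)"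
proof -
  define P where "P = x * (real (m + s) + 1)"
  have "P * (v (m + s))\<^sup>2 / 2 \<le> 9 / 2 * P * ((v k)\<^sup>2 + (v (Suc k))\<^sup>2)"
    unfolding P_def using sonin_lower sonin_mono[of k] sonin_upper[OF assms] assms by linarith
  then have "P * (v (m + s))\<^sup>2 \<le> P * (9 * ((v k)\<^sup>2 + (v (Suc k))\<^sup>2))"
    by linarith
  moreover have "0 < P"
    unfolding P_def using x_pos by simp
  ultimately show ?thesis
    by (rule mult_left_le_imp_le)
qed

lemma window_sum: "real L * (v (m + s))\<^sup>2 \<le> 18 * (\<Sum>k\<le>m + s + L. (v k)\<^sup>2)"
  by (rule window_sum_le[where f = "\<lambda>k. (v k)\<^sup>2", OF window_pointwise]) simp_all

end


section \<open>Laguerre functions\<close>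

definition disp_entry :: "real \<Rightarrow> nat \<Rightarrow> nat \<Rightarrow> real" where
  "disp_entry x m k = sqrt (fact m * fact k) * disp_coeff (sqrt x) m k"

lemma disp_coeff_add_right:
  "disp_coeff a m (m + s) =
     (\<Sum>i=0..m. (-1) ^ (s + i) * a ^ (s + 2 * i) / (fact (m - i) * fact i * fact (s + i)))"
proof -
  have "disp_coeff a m (m + s) = (\<Sum>i=0..m. disp_term a m (m + s) (m + 0 - i))"
    unfolding disp_coeff_def atMost_atLeast0 by (rule sum.atLeastAtMost_rev)
  also have "\<dots> = (\<Sum>i=0..m. (-1) ^ (s + i) * a ^ (s + 2 * i) / (fact (m - i) * fact i * fact (s + i)))"
  proof (rule sum.cong[OF refl])
    fix i assume "i \<in> {0..m}"
    then have "m + s - (m - i) = s + i" "m + (m + s) - 2 * (m - i) = s + 2 * i" "m - (m - i) = i"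
      by auto
    then show "disp_term a m (m + s) (m + 0 - i) =
        (-1) ^ (s + i) * a ^ (s + 2 * i) / (fact (m - i) * fact i * fact (s + i))"
      by (simp add: disp_term_def mult_ac)
  qed
  finally show ?thesis .
qed

lemma powr_mult_laguerre:
  assumes "0 < x"
  shows "x powr (real s / 2) * laguerre m s x = (-1) ^ s * fact (m + s) * disp_coeff (sqrt x) m (m + s)"
proof -
  have "x powr (real s / 2) = sqrt x ^ s"
    using assms by (simp add: powr_half_sqrt[symmetric] powr_realpow[symmetric] powr_powr)
  moreover have "fact (m + s) / fact m * (real (m choose i) * (-1) ^ i * x ^ i / fact (i + s)) =
      fact (m + s) * ((-1) ^ i * x ^ i / (fact (m - i) * fact i * fact (s + i)))" if "i \<le> m" for i
    by (simp add: binomial_fact[OF that] field_simps add.commute)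
  ultimately have "x powr (real s / 2) * laguerre m s x =
      fact (m + s) * (\<Sum>i=0..m. sqrt x ^ s * ((-1) ^ i * x ^ i / (fact (m - i) * fact i * fact (s + i))))"
    unfolding laguerre_def sum_distrib_left by (simp add: algebra_simps)
  also have "\<dots> = (-1) ^ s * fact (m + s) * disp_coeff (sqrt x) m (m + s)"
  proof -
    have sq: "sqrt x ^ (2 * i) = x ^ i" for i
      using assms by (simp add: power_mult)
    show ?thesis
      unfolding disp_coeff_add_right sum_distrib_left
      by (intro arg_cong[where f = "\<lambda>t. _ * t"] sum.cong refl) (simp add: power_add sq)
  qed
  finally show ?thesis .
qed


lemma laguerre_fun_sq:
  assumes "0 < x"
  shows "(laguerre_fun m s x)\<^sup>2 = exp (- x) * (disp_entry x m (m + s))\<^sup>2"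
proof -
  have "laguerre_fun m s x =
      sqrt (fact m / fact (m + s)) * exp (- x / 2) * ((-1) ^ s * fact (m + s) * disp_coeff (sqrt x) m (m + s))"
    unfolding laguerre_fun_def powr_mult_laguerre[OF assms, symmetric] by (simp add: mult_ac)
  moreover have "(exp (- x / 2))\<^sup>2 = exp (- x)"
    by (simp add: power2_eq_square flip: exp_add)
  moreover have "((-1::real) ^ s)\<^sup>2 = 1"
    by (simp add: power_even_eq flip: power_mult)
  ultimately have "(laguerre_fun m s x)\<^sup>2 =
      exp (- x) * (fact m / fact (m + s) * (fact (m + s))\<^sup>2) * (disp_coeff (sqrt x) m (m + s))\<^sup>2"
    by (simp add: power_mult_distrib)
  also have "fact m / fact (m + s) * (fact (m + s))\<^sup>2 = (sqrt (fact m * fact (m + s)) :: real)\<^sup>2"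
    by (simp add: power2_eq_square)
  finally show ?thesis
    unfolding disp_entry_def by (simp add: power_mult_distrib)
qed

lemma disp_entry_three_term:
  assumes "0 < x" and "1 \<le> k"
  shows "sqrt (x * (real k + 1)) * disp_entry x m (k + 1) + sqrt (x * real k) * disp_entry x m (k - 1) =
    (real m - real k - x) * disp_entry x m k"
proof -
  obtain j where k: "k = Suc j"
    using assms(2) by (cases k) auto
  define \<sigma> where "\<sigma> = sqrt (fact m * fact k :: real)"
  have "sqrt (x * real k) * disp_entry x m (k - 1) = sqrt x * \<sigma> * disp_coeff (sqrt x) m j"
  proof -
    have "real k * (fact m * fact j) = (fact m * fact k :: real)"
      unfolding k by simp
    then show ?thesis
      unfolding disp_entry_def \<sigma>_def k by (simp add: real_sqrt_mult)
  qed
  moreover have "sqrt (x * (real k + 1)) * disp_entry x m (k + 1) =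
      sqrt x * (real (Suc k) * \<sigma>) * disp_coeff (sqrt x) m (Suc k)"
  proof -
    have "sqrt (x * (real k + 1)) * sqrt (fact m * fact (Suc k)) =
        sqrt (x * ((real k + 1)\<^sup>2 * (fact m * fact k)))"
      by (simp add: real_sqrt_mult[symmetric] power2_eq_square algebra_simps)
    also have "\<dots> = sqrt x * (real (Suc k) * \<sigma>)"
      unfolding \<sigma>_def by (simp add: real_sqrt_mult)
    finally show ?thesis
      unfolding disp_entry_def by (simp add: mult.assoc[symmetric] del: fact_Suc)
  qed
  ultimately have "sqrt (x * (real k + 1)) * disp_entry x m (k + 1) + sqrt (x * real k) * disp_entry x m (k - 1) =
      \<sigma> * (sqrt x * (disp_coeff (sqrt x) m j + real (Suc k) * disp_coeff (sqrt x) m (Suc k)))"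
    by (simp add: algebra_simps)
  also have "\<dots> = \<sigma> * ((real m - real k - (sqrt x)\<^sup>2) * disp_coeff (sqrt x) m k)"
    using disp_coeff_three_term[of m k "sqrt x"] k by simp
  finally show ?thesis
    unfolding disp_entry_def \<sigma>_def using assms(1) by simp
qed

lemma sum_disp_entry_sq_le_exp:
  assumes "0 < x"
  shows "(\<Sum>k\<le>K. (disp_entry x m k)\<^sup>2) \<le> exp x"
proof -
  have "(\<Sum>k\<le>K. (disp_entry x m k)\<^sup>2) = row_mass (sqrt x) m K"
    unfolding row_mass_def disp_entry_def sum_distrib_left by (simp add: power_mult_distrib mult_ac)
  also have "\<dots> \<le> exp x"
    using row_mass_le_exp[of "sqrt x" m K] assms by simp
  finally show ?thesis .
qed

lemma laguerre_fun_sq_le_1: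
  assumes "0 < x"
  shows "(laguerre_fun m s x)\<^sup>2 \<le> 1"
proof -
  have "(disp_entry x m (m + s))\<^sup>2 \<le> exp x"
    using member_le_sum[of "m + s" "{..m + s}" "\<lambda>k. (disp_entry x m k)\<^sup>2"]
      sum_disp_entry_sq_le_exp[OF assms, of m "m + s"] by simp
  then show ?thesis
    unfolding laguerre_fun_sq[OF assms] by (simp add: exp_minus field_simps)
qed


lemma laguerre_fun_sq_le_inverse_sqrt:
  assumes "0 < x" and R: "R = sqrt (x * real m)" and "8 \<le> R" "8 * x \<le> R" "4 * real s \<le> R"
  shows "(laguerre_fun m s x)\<^sup>2 \<le> 288 / R"
proof -
  define L where "L = nat \<lfloor>R / 8\<rfloor>"
  have "1 \<le> \<lfloor>R / 8\<rfloor>"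
    using \<open>8 \<le> R\<close> by (simp add: le_floor_iff)
  then have "real L = of_int \<lfloor>R / 8\<rfloor>" "1 \<le> real L"
    unfolding L_def by simp_all
  then have L_le: "real L \<le> R / 8" and L_ge: "R / 16 \<le> real L"
    by linarith+
  interpret laguerre_window x R m s L "disp_entry x m"
  proof unfold_locales
    fix k :: nat
    assume "1 \<le> k"
    then show "sqrt (x * (real k + 1)) * disp_entry x m (k + 1) + sqrt (x * real k) * disp_entry x m (k - 1) =
        (real m - real k - x) * disp_entry x m k"
      by (rule disp_entry_three_term[OF assms(1)])
  qed (use assms L_le in auto)
  have "R / 16 * (disp_entry x m (m + s))\<^sup>2 \<le> real L * (disp_entry x m (m + s))\<^sup>2"
    using L_ge by (intro mult_right_mono) auto
  also have "\<dots> \<le> 18 * exp x"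
    using window_sum sum_disp_entry_sq_le_exp[OF assms(1), of m "m + s + L"] by linarith
  finally have "(disp_entry x m (m + s))\<^sup>2 \<le> 288 * exp x / R"
    using \<open>8 \<le> R\<close> by (simp add: field_simps)
  then show ?thesis
    unfolding laguerre_fun_sq[OF assms(1)] by (simp add: exp_minus field_simps)
qed

text \<open>This is the only use of \<open>s ^ 16 \<le> n\<close>; the proof needs just \<open>s ^ 4 \<le> n\<close>.\<close>

lemma outside_window_bounded:
  assumes "0 < x" and "s ^ 16 \<le> n" and R: "R = sqrt (x * real n)"
    and "\<not> (8 \<le> R \<and> 8 * x \<le> R \<and> 4 * real s \<le> R)"
  shows "real n \<le> 64 / x + 64 * x + 256 / x\<^sup>2"
proof -
  have R_sq: "R\<^sup>2 = x * real n" and "0 \<le> R"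
    unfolding R using assms(1) by simp_all
  have "real n \<le> 64 / x \<or> real n \<le> 64 * x \<or> real n \<le> 256 / x\<^sup>2"
  proof (cases "R < 4 * real s")
    case True
    have "R\<^sup>2 < (4 * real s)\<^sup>2"
      using True \<open>0 \<le> R\<close> by (intro power_strict_mono) auto
    then have "(x * real n)\<^sup>2 \<le> (16 * (real s)\<^sup>2)\<^sup>2"
      using R_sq assms(1) by (intro power_mono) (simp_all add: power_mult_distrib)
    also have "\<dots> = 256 * real s ^ 4"
      by (simp add: power_mult_distrib flip: power_mult)
    also have "\<dots> \<le> 256 * real n"
    proof -
      have "s ^ 4 \<le> n"
        using assms(2) power_increasing[of 4 16 s] by (cases "s = 0") auto
      then show ?thesis
        by (simp flip: of_nat_power)
    qed
    finally have "x\<^sup>2 * real n \<le> 256"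
      by (cases "n = 0") (auto simp: power2_eq_square)
    then show ?thesis
      using assms(1) by (simp add: field_simps)
  next
    case False
    with assms(4) have "R\<^sup>2 < 8\<^sup>2 \<or> R\<^sup>2 < (8 * x)\<^sup>2"
      using \<open>0 \<le> R\<close> power_strict_mono[of R 8 2] power_strict_mono[of R "8 * x" 2] by linarith
    then show ?thesis
      unfolding R_sq using assms(1) by (auto simp: power2_eq_square field_simps)
  qed
  moreover have "0 \<le> 64 / x" "0 \<le> 64 * x" "0 \<le> 256 / x\<^sup>2"
    using assms(1) by simp_all
  ultimately show ?thesis
    by linarith
qed


lemma laguerre_fun_sq_mult_sqrt_le:
  assumes "0 < x" and "s ^ 16 \<le> n"
  shows "(laguerre_fun n s x)\<^sup>2 * sqrt (real n + 1) \<le>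
    sqrt (64 / x + 64 * x + 256 / x\<^sup>2 + 1) + 288 * sqrt 2 / sqrt x"
proof -
  define R where "R = sqrt (x * real n)"
  have "0 \<le> sqrt (64 / x + 64 * x + 256 / x\<^sup>2 + 1)" and "0 \<le> 288 * sqrt 2 / sqrt x"
    using assms(1) by simp_all
  show ?thesis
  proof (cases "8 \<le> R \<and> 8 * x \<le> R \<and> 4 * real s \<le> R")
    case True
    then have "1 \<le> real n"
      unfolding R_def by (cases n) auto
    have "(laguerre_fun n s x)\<^sup>2 * sqrt (real n + 1) \<le> 288 / R * sqrt (2 * real n)"
      using laguerre_fun_sq_le_inverse_sqrt[OF assms(1) R_def] True \<open>1 \<le> real n\<close>
      by (intro mult_mono real_sqrt_le_mono) auto
    also have "\<dots> = 288 * sqrt 2 / sqrt x"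
      unfolding R_def using assms(1) \<open>1 \<le> real n\<close> by (simp add: real_sqrt_mult)
    finally show ?thesis
      using \<open>0 \<le> sqrt (64 / x + 64 * x + 256 / x\<^sup>2 + 1)\<close> by linarith
  next
    case False
    then have "real n \<le> 64 / x + 64 * x + 256 / x\<^sup>2"
      using outside_window_bounded[OF assms R_def] by blast
    then have "(laguerre_fun n s x)\<^sup>2 * sqrt (real n + 1) \<le> 1 * sqrt (64 / x + 64 * x + 256 / x\<^sup>2 + 1)"
      using laguerre_fun_sq_le_1[OF assms(1)] by (intro mult_mono real_sqrt_le_mono) auto
    then show ?thesis
      using \<open>0 \<le> 288 * sqrt 2 / sqrt x\<close> by linarith
  qed
qed

theorem lemma4:
  fixes x :: real
  assumes "x > 0"
  shows "\<exists>C. \<forall>n s :: nat. s ^ 16 \<le> n \<longrightarrow>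
           \<bar>laguerre_fun n s x\<bar> \<le> C / (real n + 1) powr (1/4)"
proof (intro exI allI impI)
  define B where "B = sqrt (64 / x + 64 * x + 256 / x\<^sup>2 + 1) + 288 * sqrt 2 / sqrt x"
  have "0 \<le> B"
    unfolding B_def using assms by simp
  fix n s :: nat
  assume "s ^ 16 \<le> n"
  have "((real n + 1) powr (1/4))\<^sup>2 = (real n + 1) powr (1/2)"
    by (simp add: power2_eq_square flip: powr_add)
  then have "((real n + 1) powr (1/4))\<^sup>2 = sqrt (real n + 1)"
    by (simp add: powr_half_sqrt)
  then have "(\<bar>laguerre_fun n s x\<bar> * (real n + 1) powr (1/4))\<^sup>2 \<le> (sqrt B)\<^sup>2"
    using laguerre_fun_sq_mult_sqrt_le[OF assms \<open>s ^ 16 \<le> n\<close>] assms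
    unfolding B_def by (simp add: power_mult_distrib)
  then have "\<bar>laguerre_fun n s x\<bar> * (real n + 1) powr (1/4) \<le> sqrt B"
    by (rule power2_le_imp_le) (simp add: \<open>0 \<le> B\<close>)
  then show "\<bar>laguerre_fun n s x\<bar> \<le> sqrt B / (real n + 1) powr (1/4)"
    by (simp add: field_simps)
qed

end
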